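(* Let $P\in\Delta_{\mathcal{T},\mathcal{X},\mathcal{Y}}$ with $H_P(X)>0$ and $H_P(Y)>0$. If under $P$ both $T$ is independent of $X$ and $T$ is independent of $Y$, then $\arg\max_{Q\in\Delta_P}H_Q(T\mid X,Y)$ contains more than one element.
   Context: $T,X,Y$ are random variables with finite state spaces $\mathcal{T},\mathcal{X},\mathcal{Y}$; $\Delta_{\mathcal{T},\mathcal{X},\mathcal{Y}}$ is the set of all joint distributions on $\mathcal{T}\times\mathcal{X}\times\mathcal{Y}$. For $P\in\Delta_{\mathcal{T},\mathcal{X},\mathcal{Y}}$, $\Delta_P=\{Q\in\Delta_{\mathcal{T},\mathcal{X},\mathcal{Y}}: Q(X=x,T=t)=P(X=x,T=t),\ Q(Y=y,T=t)=P(Y=y,T=t)\ \forall x,y,t\}$. $H$ denotes Shannon entropy; $H_Q(T\mid X,Y)$ the conditional entropy under $Q$. *)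

theory Defs
  imports Complex_Main
begin

definition is_dist :: "('t::finite \<Rightarrow> 'x::finite \<Rightarrow> 'y::finite \<Rightarrow> real) \<Rightarrow> bool" where
  "is_dist P \<longleftrightarrow> (\<forall>t x y. 0 \<le> P t x y) \<and> (\<Sum>t\<in>UNIV. \<Sum>x\<in>UNIV. \<Sum>y\<in>UNIV. P t x y) = 1"

definition marg_T :: "('t::finite \<Rightarrow> 'x::finite \<Rightarrow> 'y::finite \<Rightarrow> real) \<Rightarrow> 't \<Rightarrow> real" where
  "marg_T P t = (\<Sum>x\<in>UNIV. \<Sum>y\<in>UNIV. P t x y)"

definition marg_X :: "('t::finite \<Rightarrow> 'x::finite \<Rightarrow> 'y::finite \<Rightarrow> real) \<Rightarrow> 'x \<Rightarrow> real" where
  "marg_X P x = (\<Sum>t\<in>UNIV. \<Sum>y\<in>UNIV. P t x y)"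

definition marg_Y :: "('t::finite \<Rightarrow> 'x::finite \<Rightarrow> 'y::finite \<Rightarrow> real) \<Rightarrow> 'y \<Rightarrow> real" where
  "marg_Y P y = (\<Sum>t\<in>UNIV. \<Sum>x\<in>UNIV. P t x y)"

definition marg_TX :: "('t::finite \<Rightarrow> 'x::finite \<Rightarrow> 'y::finite \<Rightarrow> real) \<Rightarrow> 't \<Rightarrow> 'x \<Rightarrow> real" where
  "marg_TX P t x = (\<Sum>y\<in>UNIV. P t x y)"

definition marg_TY :: "('t::finite \<Rightarrow> 'x::finite \<Rightarrow> 'y::finite \<Rightarrow> real) \<Rightarrow> 't \<Rightarrow> 'y \<Rightarrow> real" where
  "marg_TY P t y = (\<Sum>x\<in>UNIV. P t x y)"

definition marg_XY :: "('t::finite \<Rightarrow> 'x::finite \<Rightarrow> 'y::finite \<Rightarrow> real) \<Rightarrow> 'x \<Rightarrow> 'y \<Rightarrow> real" where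
  "marg_XY P x y = (\<Sum>t\<in>UNIV. P t x y)"

definition entropy :: "('a::finite \<Rightarrow> real) \<Rightarrow> real" where
  "entropy p = - (\<Sum>a\<in>UNIV. if p a = 0 then 0 else p a * log 2 (p a))"

definition cond_entropy_T_XY :: "('t::finite \<Rightarrow> 'x::finite \<Rightarrow> 'y::finite \<Rightarrow> real) \<Rightarrow> real" where
  "cond_entropy_T_XY Q = - (\<Sum>t\<in>UNIV. \<Sum>x\<in>UNIV. \<Sum>y\<in>UNIV.
      if Q t x y = 0 then 0 else Q t x y * log 2 (Q t x y / marg_XY Q x y))"

definition Delta_P :: "('t::finite \<Rightarrow> 'x::finite \<Rightarrow> 'y::finite \<Rightarrow> real) \<Rightarrow> ('t \<Rightarrow> 'x \<Rightarrow> 'y \<Rightarrow> real) set" where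
  "Delta_P P = {Q. is_dist Q \<and> (\<forall>t x. marg_TX Q t x = marg_TX P t x) \<and> (\<forall>t y. marg_TY Q t y = marg_TY P t y)}"

definition argmax_cond_entropy :: "('t::finite \<Rightarrow> 'x::finite \<Rightarrow> 'y::finite \<Rightarrow> real) \<Rightarrow> ('t \<Rightarrow> 'x \<Rightarrow> 'y \<Rightarrow> real) set" where
  "argmax_cond_entropy P = {Q \<in> Delta_P P. \<forall>Q'\<in>Delta_P P. cond_entropy_T_XY Q' \<le> cond_entropy_T_XY Q}"

end

theory Submission
  imports Defs
begin

text \<open>Conditioning never increases entropy, so every Q \<in> Delta_P satisfies
H_Q(T | X,Y) \<le> H(T), the T-marginal being fixed on Delta_P. Conversely, when T is
independent of X and of Y, every distribution p_T(t) r(x,y) with r a coupling of p_X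
and p_Y lies in Delta_P and attains H(T). Since p_X and p_Y have positive entropy,
each has two support points, and perturbing the product coupling p_X p_Y along
(\<delta>_x1 - \<delta>_x2)(\<delta>_y1 - \<delta>_y2) yields a second coupling.\<close>

definition coupling :: "('x \<Rightarrow> real) \<Rightarrow> ('y \<Rightarrow> real) \<Rightarrow> ('x::finite \<Rightarrow> 'y::finite \<Rightarrow> real) \<Rightarrow> bool" where
  "coupling p q r \<longleftrightarrow> (\<forall>x y. 0 \<le> r x y) \<and> (\<forall>x. (\<Sum>y\<in>UNIV. r x y) = p x) \<and> (\<forall>y. (\<Sum>x\<in>UNIV. r x y) = q y)"

lemma xlog_ratio_ge:
  fixes q m a :: real
  assumes "0 \<le> q" "q \<le> m" "q \<le> a"
  shows "-(if q = 0 then 0 else q * log 2 (q / m))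
           \<le> -(if q = 0 then 0 else q * log 2 a) + (m * a - q) / ln 2"
proof (cases "q = 0")
  case False
  then have q: "q > 0" using assms by simp
  have m: "m > 0" "a > 0" using q assms by auto
  have log_gap: "q * log 2 a - q * log 2 (q / m) = q * ln (m * a / q) / ln 2"
    using q m by (simp add: log_def ln_div ln_mult field_simps)
  have "q * ln (m * a / q) \<le> q * (m * a / q - 1)"
    using q m by (intro mult_left_mono ln_le_minus_one) auto
  also have "\<dots> = m * a - q" using q by (simp add: field_simps)
  finally have "q * ln (m * a / q) / ln 2 \<le> (m * a - q) / ln 2" by (simp add: divide_right_mono)
  then show ?thesis using log_gap False by simp
qed (use assms in simp)

lemma is_dist_nonneg: "is_dist P \<Longrightarrow> 0 \<le> P t x y"
  by (simp add: is_dist_def)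

lemma sum_marg_T: "is_dist P \<Longrightarrow> (\<Sum>t\<in>UNIV. marg_T P t) = 1"
  by (simp add: is_dist_def marg_T_def)

lemma sum_marg_X:
  assumes "is_dist P"
  shows "(\<Sum>x\<in>UNIV. marg_X P x) = 1"
proof -
  have "(\<Sum>x\<in>UNIV. \<Sum>t\<in>UNIV. \<Sum>y\<in>UNIV. P t x y) = (\<Sum>t\<in>UNIV. \<Sum>x\<in>UNIV. \<Sum>y\<in>UNIV. P t x y)"
    by (rule sum.swap)
  then show ?thesis using assms by (simp add: marg_X_def is_dist_def)
qed

lemma sum_marg_Y:
  assumes "is_dist P"
  shows "(\<Sum>y\<in>UNIV. marg_Y P y) = 1"
proof -
  have "(\<Sum>y\<in>UNIV. \<Sum>t\<in>UNIV. \<Sum>x\<in>UNIV. P t x y) = (\<Sum>t\<in>UNIV. \<Sum>y\<in>UNIV. \<Sum>x\<in>UNIV. P t x y)"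
    by (rule sum.swap)
  also have "\<dots> = (\<Sum>t\<in>UNIV. \<Sum>x\<in>UNIV. \<Sum>y\<in>UNIV. P t x y)"
    by (intro sum.cong refl sum.swap)
  finally show ?thesis using assms by (simp add: marg_Y_def is_dist_def)
qed

lemma sum_marg_XY:
  assumes "is_dist P"
  shows "(\<Sum>x\<in>UNIV. \<Sum>y\<in>UNIV. marg_XY P x y) = 1"
proof -
  have "(\<Sum>x\<in>UNIV. \<Sum>y\<in>UNIV. \<Sum>t\<in>UNIV. P t x y) = (\<Sum>x\<in>UNIV. \<Sum>t\<in>UNIV. \<Sum>y\<in>UNIV. P t x y)"
    by (intro sum.cong refl sum.swap)
  also have "\<dots> = (\<Sum>t\<in>UNIV. \<Sum>x\<in>UNIV. \<Sum>y\<in>UNIV. P t x y)"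
    by (rule sum.swap)
  finally show ?thesis using assms by (simp add: marg_XY_def is_dist_def)
qed

lemma marg_X_nonneg: "is_dist P \<Longrightarrow> 0 \<le> marg_X P x"
  by (simp add: marg_X_def sum_nonneg is_dist_nonneg)

lemma marg_Y_nonneg: "is_dist P \<Longrightarrow> 0 \<le> marg_Y P y"
  by (simp add: marg_Y_def sum_nonneg is_dist_nonneg)

lemma marg_T_Delta_P:
  assumes "Q \<in> Delta_P P"
  shows "marg_T Q = marg_T P"
proof
  fix t
  have "marg_T Q t = (\<Sum>x\<in>UNIV. marg_TX Q t x)" by (simp add: marg_T_def marg_TX_def)
  also have "\<dots> = (\<Sum>x\<in>UNIV. marg_TX P t x)" using assms by (simp add: Delta_P_def)
  finally show "marg_T Q t = marg_T P t" by (simp add: marg_T_def marg_TX_def)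
qed

lemma cond_entropy_T_XY_le_entropy_marg_T:
  fixes Q :: "'t::finite \<Rightarrow> 'x::finite \<Rightarrow> 'y::finite \<Rightarrow> real"
  assumes Q: "is_dist Q"
  shows "cond_entropy_T_XY Q \<le> entropy (marg_T Q)"
proof -
  define a where "a = marg_T Q"
  define m where "m = marg_XY Q"
  note nn = is_dist_nonneg[OF Q]
  have qm: "Q t x y \<le> m x y" for t x y
    unfolding m_def marg_XY_def using nn by (intro member_le_sum) auto
  have qa: "Q t x y \<le> a t" for t x y
  proof -
    have "Q t x y \<le> (\<Sum>y\<in>UNIV. Q t x y)" using nn by (intro member_le_sum) auto
    also have "\<dots> \<le> (\<Sum>x\<in>UNIV. \<Sum>y\<in>UNIV. Q t x y)" using nn
      by (intro member_le_sum[where f="\<lambda>x. \<Sum>y\<in>UNIV. Q t x y"]) (auto intro: sum_nonneg)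
    finally show ?thesis by (simp add: a_def marg_T_def)
  qed
  define g where "g t x y = (if Q t x y = 0 then 0 else Q t x y * log 2 (a t))" for t x y
  have mass: "(\<Sum>t\<in>UNIV. \<Sum>x\<in>UNIV. \<Sum>y\<in>UNIV. m x y * a t) = 1"
  proof -
    have "(\<Sum>t\<in>UNIV. \<Sum>x\<in>UNIV. \<Sum>y\<in>UNIV. m x y * a t)
            = (\<Sum>t\<in>UNIV. a t * (\<Sum>x\<in>UNIV. \<Sum>y\<in>UNIV. m x y))"
      by (simp add: sum_distrib_left mult.commute)
    also have "\<dots> = (\<Sum>t\<in>UNIV. a t) * (\<Sum>x\<in>UNIV. \<Sum>y\<in>UNIV. m x y)"
      by (simp add: sum_distrib_right)
    finally show ?thesis using sum_marg_T[OF Q] sum_marg_XY[OF Q] by (simp add: a_def m_def)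
  qed
  have g_sum: "(\<Sum>x\<in>UNIV. \<Sum>y\<in>UNIV. g t x y) = (if a t = 0 then 0 else a t * log 2 (a t))" for t
  proof -
    have "(\<Sum>x\<in>UNIV. \<Sum>y\<in>UNIV. g t x y) = (\<Sum>x\<in>UNIV. \<Sum>y\<in>UNIV. Q t x y * log 2 (a t))"
      unfolding g_def by (intro sum.cong refl) simp
    also have "\<dots> = a t * log 2 (a t)" by (simp add: a_def marg_T_def sum_distrib_right)
    finally show ?thesis by simp
  qed
  have "cond_entropy_T_XY Q \<le> (\<Sum>t\<in>UNIV. \<Sum>x\<in>UNIV. \<Sum>y\<in>UNIV. - g t x y + (m x y * a t - Q t x y) / ln 2)"
    unfolding cond_entropy_T_XY_def g_def m_def[symmetric] sum_negf[symmetric]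
    by (intro sum_mono xlog_ratio_ge nn qm qa)
  also have "\<dots> = - (\<Sum>t\<in>UNIV. \<Sum>x\<in>UNIV. \<Sum>y\<in>UNIV. g t x y)
       + ((\<Sum>t\<in>UNIV. \<Sum>x\<in>UNIV. \<Sum>y\<in>UNIV. m x y * a t) - (\<Sum>t\<in>UNIV. \<Sum>x\<in>UNIV. \<Sum>y\<in>UNIV. Q t x y)) / ln 2"
    by (simp add: sum.distrib sum_negf sum_subtractf sum_divide_distrib diff_divide_distrib)
  also have "\<dots> = entropy a"
    using mass Q by (simp add: g_sum entropy_def is_dist_def)
  finally show ?thesis by (simp add: a_def)
qed

lemma cond_entropy_T_XY_product:
  fixes a :: "'t::finite \<Rightarrow> real" and r :: "'x::finite \<Rightarrow> 'y::finite \<Rightarrow> real"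
  assumes "sum a UNIV = 1" "(\<Sum>x\<in>UNIV. \<Sum>y\<in>UNIV. r x y) = 1"
  shows "cond_entropy_T_XY (\<lambda>t x y. a t * r x y) = entropy a"
proof -
  have "marg_XY (\<lambda>t x y. a t * r x y) = r"
    using assms(1) by (simp add: fun_eq_iff marg_XY_def sum_distrib_right[symmetric])
  then have "cond_entropy_T_XY (\<lambda>t x y. a t * r x y)
      = - (\<Sum>t\<in>UNIV. \<Sum>x\<in>UNIV. \<Sum>y\<in>UNIV. r x y * (if a t = 0 then 0 else a t * log 2 (a t)))"
    unfolding cond_entropy_T_XY_def by (intro arg_cong[where f=uminus] sum.cong refl) auto
  also have "\<dots> = entropy a"
    using assms(2) by (simp add: entropy_def sum_distrib_right[symmetric])
  finally show ?thesis .
qed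

lemma product_coupling:
  assumes "sum p UNIV = 1" "sum q UNIV = 1" "\<forall>x. 0 \<le> p x" "\<forall>y. 0 \<le> q y"
  shows "coupling p q (\<lambda>x y. p x * q y)"
  using assms by (simp add: coupling_def sum_distrib_left[symmetric] sum_distrib_right[symmetric])

lemma perturbed_coupling:
  fixes p :: "'x::finite \<Rightarrow> real" and q :: "'y::finite \<Rightarrow> real"
  assumes r: "coupling p q r" and x12: "x1 \<noteq> x2" and y12: "y1 \<noteq> y2"
    and e: "e \<le> r x1 y2" "e \<le> r x2 y1" "0 \<le> e"
  defines "d x y \<equiv> ((if x = x1 then 1 else 0) - (if x = x2 then 1 else 0))
                   * ((if y = y1 then 1 else 0) - (if y = y2 then 1 else 0))"
  shows "coupling p q (\<lambda>x y. r x y + e * d x y)"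
proof -
  have "\<forall>x. (\<Sum>y\<in>UNIV. d x y) = 0" "\<forall>y. (\<Sum>x\<in>UNIV. d x y) = 0"
    by (simp_all add: d_def sum_subtractf sum_distrib_left sum_distrib_right)
  moreover have "0 \<le> r x y + e * d x y" for x y
    using r e x12 y12 by (auto simp: coupling_def d_def)
  ultimately show ?thesis
    using r by (simp add: coupling_def sum.distrib sum_distrib_left[symmetric])
qed

lemma entropy_pos_two_support:
  fixes p :: "'a::finite \<Rightarrow> real"
  assumes nn: "\<forall>x. 0 \<le> p x" and one: "sum p UNIV = 1" and H: "entropy p > 0"
  obtains x1 x2 where "x1 \<noteq> x2" "p x1 > 0" "p x2 > 0"
proof -
  have "\<exists>x1 x2. x1 \<noteq> x2 \<and> p x1 > 0 \<and> p x2 > 0"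
  proof (rule ccontr)
    assume single: "\<not> ?thesis"
    have "(if p x = 0 then 0 else p x * log 2 (p x)) = 0" for x
    proof (cases "p x = 0")
      case False
      then have "p x > 0" using nn by (metis order_le_less)
      then have "\<forall>x'\<in>UNIV - {x}. p x' = 0" using single nn by (metis DiffE order_le_less singletonI)
      then have "p x = 1" using one sum.remove[of UNIV x p] by simp
      then show ?thesis by simp
    qed simp
    then show False using H by (simp add: entropy_def)
  qed
  then show ?thesis using that by blast
qed

lemma two_couplings:
  fixes p :: "'x::finite \<Rightarrow> real" and q :: "'y::finite \<Rightarrow> real"
  assumes "sum p UNIV = 1" "sum q UNIV = 1" "\<forall>x. 0 \<le> p x" "\<forall>y. 0 \<le> q y"
    and "entropy p > 0" "entropy q > 0"
  shows "\<exists>r1 r2. coupling p q r1 \<and> coupling p q r2 \<and> r1 \<noteq> r2"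
proof -
  obtain x1 x2 where x: "x1 \<noteq> x2" "p x1 > 0" "p x2 > 0"
    using entropy_pos_two_support assms by metis
  obtain y1 y2 where y: "y1 \<noteq> y2" "q y1 > 0" "q y2 > 0"
    using entropy_pos_two_support assms by metis
  define r where "r x y = p x * q y" for x y
  define e where "e = min (r x1 y2) (r x2 y1)"
  have e: "e > 0" using x y by (simp add: e_def r_def)
  have "coupling p q r" using product_coupling[OF assms(1-4)] by (simp add: r_def[abs_def])
  moreover note perturbed_coupling[OF this x(1) y(1), of e]
  ultimately show ?thesis using e x(1) y(1) by (fastforce simp: e_def fun_eq_iff)
qed

lemma product_with_coupling_argmax:
  fixes P :: "'t::finite \<Rightarrow> 'x::finite \<Rightarrow> 'y::finite \<Rightarrow> real"
  assumes P: "is_dist P"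
    and indep_X: "\<forall>t x. marg_TX P t x = marg_T P t * marg_X P x"
    and indep_Y: "\<forall>t y. marg_TY P t y = marg_T P t * marg_Y P y"
    and r: "coupling (marg_X P) (marg_Y P) r"
  shows "(\<lambda>t x y. marg_T P t * r x y) \<in> argmax_cond_entropy P"
proof -
  define Q where "Q t x y = marg_T P t * r x y" for t x y
  have r1: "(\<Sum>x\<in>UNIV. \<Sum>y\<in>UNIV. r x y) = 1"
    using r sum_marg_X[OF P] by (simp add: coupling_def)
  have "is_dist Q"
    using r r1 sum_marg_T[OF P] P
    by (simp add: is_dist_def Q_def coupling_def marg_T_def sum_distrib_left[symmetric]
        sum_nonneg is_dist_nonneg)
  then have Q: "Q \<in> Delta_P P"
    using indep_X indep_Y r
    by (simp add: Delta_P_def coupling_def Q_def marg_TX_def[of Q] marg_TY_def[of Q]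
        sum_distrib_left[symmetric])
  have "cond_entropy_T_XY Q' \<le> cond_entropy_T_XY Q" if "Q' \<in> Delta_P P" for Q'
  proof -
    have "cond_entropy_T_XY Q' \<le> entropy (marg_T P)"
      using cond_entropy_T_XY_le_entropy_marg_T[of Q'] marg_T_Delta_P[OF that] that
      by (simp add: Delta_P_def)
    also have "\<dots> = cond_entropy_T_XY Q"
      using cond_entropy_T_XY_product[OF sum_marg_T[OF P] r1] by (simp add: Q_def[abs_def])
    finally show ?thesis .
  qed
  with Q show ?thesis by (simp add: argmax_cond_entropy_def Q_def[abs_def])
qed

theorem mainTheorem10:
  fixes P :: "'t::finite \<Rightarrow> 'x::finite \<Rightarrow> 'y::finite \<Rightarrow> real"
  assumes "is_dist P"
    and "entropy (marg_X P) > 0"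
    and "entropy (marg_Y P) > 0"
    and "\<forall>t x. marg_TX P t x = marg_T P t * marg_X P x"
    and "\<forall>t y. marg_TY P t y = marg_T P t * marg_Y P y"
  shows "\<exists>Q1 Q2. Q1 \<in> argmax_cond_entropy P \<and> Q2 \<in> argmax_cond_entropy P \<and> Q1 \<noteq> Q2"
proof -
  obtain r1 r2 where r: "coupling (marg_X P) (marg_Y P) r1" "coupling (marg_X P) (marg_Y P) r2"
    and "r1 \<noteq> r2"
    using two_couplings sum_marg_X sum_marg_Y marg_X_nonneg marg_Y_nonneg assms(1-3) by metis
  then obtain x y where xy: "r1 x y \<noteq> r2 x y" by (meson ext)
  obtain t where t: "marg_T P t \<noteq> 0"
    using sum_marg_T[OF assms(1)] by (metis sum.neutral zero_neq_one)
  have "(\<lambda>t x y. marg_T P t * r1 x y) \<noteq> (\<lambda>t x y. marg_T P t * r2 x y)"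
    using t xy by (metis mult_left_cancel)
  then show ?thesis
    using product_with_coupling_argmax[OF assms(1,4,5)] r by blast
qed

end
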